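(* Let $f$ be the linear Anosov diffeomorphism of $\mathbb{T}^2=\mathbb{R}^2/\mathbb{Z}^2$ induced by $L=\begin{pmatrix}a&b\\c&d\end{pmatrix}$ with $a,b,c,d\in\mathbb{Z}$ and $ad-bc=1$ (and $L$ has no eigenvalue on the unit circle). Then: (i) $b$ divides $a-d$ if and only if $f$ is $R$-reversible for $R$ the involution of $\mathbb{T}^2$ induced by a matrix of the form $\begin{pmatrix}1&0\\ \gamma&-1\end{pmatrix}$ with $\gamma\in\mathbb{Z}$ (necessarily $\gamma=\frac{d-a}{b}$), and likewise if and only if $f$ is $R$-reversible for $R$ induced by a matrix $\begin{pmatrix}-1&0\\ \gamma&1\end{pmatrix}$ with $\gamma\in\mathbb{Z}$ (necessarily $\gamma=\frac{a-d}{b}$). (ii) $c$ divides $a-d$ if and only if $f$ is $R$-reversible for $R$ induced by a matrix of the form $\begin{pmatrix}1&\gamma\\ 0&-1\end{pmatrix}$ with $\gamma\in\mathbb{Z}$ (necessarily $\gamma=\frac{d-a}{c}$), and likewise if and only if $f$ is $R$-reversible for $R$ induced by a matrix $\begin{pmatrix}-1&\gamma\\ 0&1\end{pmatrix}$ with $\gamma\in\mathbb{Z}$ (necessarily $\gamma=\frac{a-d}{c}$). (iii) Given $\alpha,\beta\in\mathbb{Z}\setminus\{0\}$ with $1-\alpha^2\neq0$ and $\beta$ dividing $1-\alpha^2$, let $R$ be the involution of $\mathbb{T}^2$ induced by $A=\begin{pmatrix}\alpha&\beta\\ \frac{1-\alpha^2}{\beta}&-\alpha\end{pmatrix}$. Then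 $f$ is $R$-reversible if and only if $(x,y)=(2b\alpha+(d-a)\beta,\ \beta)$ is a solution of the generalized Pell equation $x^2-Dy^2=N$, where $D=(a+d)^2-4$ and $N=4b^2$.
   Context: A diffeomorphism of $\mathbb{T}^2$ is induced by an integer matrix $M$ with $\det M=\pm1$ if it is the map $\pi(v)\mapsto\pi(Mv)$, where $\pi:\mathbb{R}^2\to\mathbb{R}^2/\mathbb{Z}^2$ is the projection. A linear Anosov diffeomorphism is one induced by such a matrix with no eigenvalue of modulus one. For an involution $R$ ($R\circ R=\mathrm{Id}$), $f$ is $R$-reversible if $R\circ f=f^{-1}\circ R$. *)

theory Defs
  imports Complex_Main
begin

text \<open>The torus R^2/Z^2, represented by canonical representatives in [0,1)^2;
  the projection pi is (x,y) maps to (frac x, frac y).\<close>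
definition torus :: "(real \<times> real) set" where
  "torus = {0..<1} \<times> {0..<1}"

definition induced :: "int \<Rightarrow> int \<Rightarrow> int \<Rightarrow> int \<Rightarrow> real \<times> real \<Rightarrow> real \<times> real" where
  "induced a b c d = (\<lambda>(x, y). (frac (of_int a * x + of_int b * y), frac (of_int c * x + of_int d * y)))"

definition anosov_matrix :: "int \<Rightarrow> int \<Rightarrow> int \<Rightarrow> int \<Rightarrow> bool" where
  "anosov_matrix a b c d \<longleftrightarrow> (a * d - b * c = 1 \<or> a * d - b * c = -1) \<and>
     (\<forall>l::complex. cmod l = 1 \<longrightarrow>
        (l - of_int a) * (l - of_int d) - of_int b * of_int c \<noteq> 0)"

definition involution_on :: "'a set \<Rightarrow> ('a \<Rightarrow> 'a) \<Rightarrow> bool" where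
  "involution_on T R \<longleftrightarrow> (\<forall>p\<in>T. R p \<in> T \<and> R (R p) = p)"

definition reversible :: "'a set \<Rightarrow> ('a \<Rightarrow> 'a) \<Rightarrow> ('a \<Rightarrow> 'a) \<Rightarrow> bool" where
  "reversible T R f \<longleftrightarrow> involution_on T R \<and> (\<forall>p\<in>T. R (f p) = inv_into T f (R p))"

definition pell_solution :: "int \<Rightarrow> int \<Rightarrow> int \<Rightarrow> int \<Rightarrow> bool" where
  "pell_solution D N x y \<longleftrightarrow> x^2 - D * y^2 = N"

end

theory Submission
  imports Defs
begin

text \<open>The map induced by an integer matrix composes like matrix multiplication and acts
  faithfully on the torus. For an involutive matrix \<open>P\<close> (\<open>det P = -1\<close>) and \<open>L\<close> with
  \<open>det L = 1\<close>, reversibility of \<open>f\<close> under \<open>R\<close> means \<open>(R \<circ> f)\<^sup>2 = id\<close>, i.e. \<open>(P L)\<^sup>2 = I\<close>;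
  since \<open>det (P L) = -1\<close>, Cayley--Hamilton turns this into \<open>tr (P L) = 0\<close>, a linear condition
  on the entries of \<open>P\<close>. For the special forms of \<open>P\<close> in (i) and (ii) it reads \<open>\<gamma> b = \<plusminus>(d - a)\<close>;
  in (iii), multiplying it by \<open>-4 b \<beta>\<close> and using \<open>b c = a d - 1\<close> gives the Pell equation.\<close>

lemma frac_int_combination_frac:
  "frac (of_int a * frac u + of_int b * frac v) = frac (of_int a * u + of_int b * v)"
proof -
  have "of_int a * frac u + of_int b * frac v
      = (of_int a * u + of_int b * v) + of_int (- a * \<lfloor>u\<rfloor> - b * \<lfloor>v\<rfloor>)"
    by (simp add: frac_def algebra_simps)
  then show ?thesis by (simp only: frac_add_of_int_right)
qed

lemma induced_comp:
  "induced a b c d (induced e f g h p)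
     = induced (a*e + b*g) (a*f + b*h) (c*e + d*g) (c*f + d*h) p"
proof -
  obtain x y where p: "p = (x, y)" by (cases p)
  have "of_int (a*e + b*g) * x + of_int (a*f + b*h) * y
      = of_int a * (of_int e * x + of_int f * y) + of_int b * (of_int g * x + of_int h * y)"
    "of_int (c*e + d*g) * x + of_int (c*f + d*h) * y
      = of_int c * (of_int e * x + of_int f * y) + of_int d * (of_int g * x + of_int h * y)"
    by (simp_all add: algebra_simps)
  then show ?thesis unfolding induced_def p by (simp add: frac_int_combination_frac)
qed

lemma induced_in_torus: "induced a b c d p \<in> torus"
  by (cases p) (simp add: induced_def torus_def frac_lt_1)

lemma induced_identity: "p \<in> torus \<Longrightarrow> induced 1 0 0 1 p = p"
  by (cases p) (simp add: induced_def torus_def)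

lemma int_eq_0_if_multiples_Ints:
  fixes k :: int
  assumes "\<forall>x\<in>{0..<1::real}. of_int k * x \<in> \<int>"
  shows "k = 0"
proof (rule ccontr)
  assume "k \<noteq> 0"
  define m :: real where "m = of_int (\<bar>k\<bar> + 2)"
  have "m \<ge> 2" unfolding m_def by simp
  then have "1 / m \<in> {0..<1}" by simp
  then obtain n where "of_int k * (1 / m) = of_int n"
    using assms Ints_cases by blast
  then have "of_int k = of_int n * m" using \<open>m \<ge> 2\<close> by (simp add: field_simps)
  then have k: "k = n * (\<bar>k\<bar> + 2)" unfolding m_def by (metis of_int_eq_iff of_int_mult)
  with \<open>k \<noteq> 0\<close> have "n \<noteq> 0" by auto
  then have "\<bar>n * (\<bar>k\<bar> + 2)\<bar> \<ge> \<bar>k\<bar> + 2"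
    using mult_right_mono[of 1 "\<bar>n\<bar>" "\<bar>k\<bar> + 2"] by (simp add: abs_mult)
  with k show False by simp
qed

lemma induced_eq_id_iff:
  "(\<forall>p\<in>torus. induced a b c d p = p) \<longleftrightarrow> a = 1 \<and> b = 0 \<and> c = 0 \<and> d = 1"
proof
  assume id: "\<forall>p\<in>torus. induced a b c d p = p"
  have "\<forall>x\<in>{0..<1::real}. of_int (a - 1) * x \<in> \<int> \<and> of_int c * x \<in> \<int>
                         \<and> of_int b * x \<in> \<int> \<and> of_int (d - 1) * x \<in> \<int>"
  proof
    fix x :: real assume x: "x \<in> {0..<1}"
    then have "(x, 0) \<in> torus" "(0, x) \<in> torus" by (simp_all add: torus_def)
    then have "induced a b c d (x, 0) = (x, 0)" "induced a b c d (0, x) = (0, x)"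
      using id by blast+
    with x show "of_int (a - 1) * x \<in> \<int> \<and> of_int c * x \<in> \<int>
                 \<and> of_int b * x \<in> \<int> \<and> of_int (d - 1) * x \<in> \<int>"
      by (simp add: induced_def frac_unique_iff frac_eq_0_iff algebra_simps)
  qed
  then show "a = 1 \<and> b = 0 \<and> c = 0 \<and> d = 1"
    using int_eq_0_if_multiples_Ints[of "a - 1"] int_eq_0_if_multiples_Ints[of c]
      int_eq_0_if_multiples_Ints[of b] int_eq_0_if_multiples_Ints[of "d - 1"] by auto
qed (simp add: induced_identity)

lemma bij_betw_induced:
  assumes "\<bar>a * d - b * c\<bar> = 1"
  shows "bij_betw (induced a b c d) torus torus"
proof -
  define e where "e = a * d - b * c"
  have "e = 1 \<or> e = -1" using assms unfolding e_def by arith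
  then have det_e: "e * (a * d - b * c) = 1" unfolding e_def[symmetric] by auto
  have "a*(e*d) + b*(-(e*c)) = e * (a * d - b * c)" "a*(-(e*b)) + b*(e*a) = 0"
    "c*(e*d) + d*(-(e*c)) = 0" "c*(-(e*b)) + d*(e*a) = e * (a * d - b * c)"
    "e*d*a + -(e*b)*c = e * (a * d - b * c)" "e*d*b + -(e*b)*d = 0"
    "-(e*c)*a + e*a*c = 0" "-(e*c)*b + e*a*d = e * (a * d - b * c)"
    by (simp_all add: algebra_simps)
  then have inverse: "induced a b c d (induced (e*d) (-(e*b)) (-(e*c)) (e*a) p) = p"
    "induced (e*d) (-(e*b)) (-(e*c)) (e*a) (induced a b c d p) = p" if "p \<in> torus" for p
    using that unfolding induced_comp det_e by (simp_all add: induced_identity)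
  then show ?thesis
    using induced_in_torus
    by (intro bij_betw_byWitness[where f' = "induced (e*d) (-(e*b)) (-(e*c)) (e*a)"]) auto
qed

lemma involution_on_induced:
  assumes "p * p + q * r = 1"
  shows "involution_on torus (induced p q r (-p))"
  using assms unfolding involution_on_def induced_comp
  by (simp add: algebra_simps induced_identity induced_in_torus)

lemma reversible_iff_involutive_comp:
  assumes "involution_on T R" and "bij_betw f T T"
  shows "reversible T R f \<longleftrightarrow> (\<forall>x\<in>T. R (f (R (f x))) = x)"
proof -
  have R: "R x \<in> T" "R (R x) = x" if "x \<in> T" for x
    using assms(1) that unfolding involution_on_def by auto
  have f: "f x \<in> T" "x \<in> f ` T" if "x \<in> T" for x
    using assms(2) that by (auto simp: bij_betw_def)
  have inj: "inj_on f T" using assms(2) by (rule bij_betw_imp_inj_on)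
  have "R (f x) = inv_into T f (R x) \<longleftrightarrow> R (f (R (f x))) = x" if "x \<in> T" for x
  proof
    assume "R (f x) = inv_into T f (R x)"
    then have "f (R (f x)) = R x" using f_inv_into_f[OF f(2)[OF R(1)[OF that]]] by simp
    then show "R (f (R (f x))) = x" using R that by simp
  next
    assume "R (f (R (f x))) = x"
    then have "f (R (f x)) = R x" using R f that by metis
    then show "R (f x) = inv_into T f (R x)"
      using inv_into_f_f[OF inj R(1)[OF f(1)[OF that]]] by simp
  qed
  then show ?thesis using assms(1) unfolding reversible_def by auto
qed

text \<open>Cayley--Hamilton for \<open>2 \<times> 2\<close> matrices of determinant \<open>-1\<close>: \<open>M\<^sup>2 = tr M \<cdot> M + I\<close>.\<close>

lemma involutory_iff_trace_zero:
  fixes m11 m12 m21 m22 :: "'a :: idom"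
  assumes det: "m11 * m22 - m12 * m21 = -1"
  shows "(m11*m11 + m12*m21 = 1 \<and> m11*m12 + m12*m22 = 0 \<and>
          m21*m11 + m22*m21 = 0 \<and> m21*m12 + m22*m22 = 1) \<longleftrightarrow> m11 + m22 = 0"
proof
  assume sq: "m11*m11 + m12*m21 = 1 \<and> m11*m12 + m12*m22 = 0 \<and>
              m21*m11 + m22*m21 = 0 \<and> m21*m12 + m22*m22 = 1"
  have "(m11 + m22) * m11 = (m11*m11 + m12*m21) + (m11 * m22 - m12 * m21)"
    "(m11 + m22) * m12 = m11*m12 + m12*m22"
    "(m11 + m22) * m22 = (m21*m12 + m22*m22) + (m11 * m22 - m12 * m21)"
    by (simp_all add: algebra_simps)
  then have "(m11 + m22) * m11 = 0" "(m11 + m22) * m12 = 0" "(m11 + m22) * m22 = 0"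
    using sq det by simp_all
  then show "m11 + m22 = 0" using det by auto
next
  assume "m11 + m22 = 0"
  then have "m22 = - m11" by (simp add: add_eq_0_iff)
  then show "m11*m11 + m12*m21 = 1 \<and> m11*m12 + m12*m22 = 0 \<and>
             m21*m11 + m22*m21 = 0 \<and> m21*m12 + m22*m22 = 1"
    using det by (simp add: algebra_simps)
qed

lemma reversible_induced_iff_trace:
  fixes a b c d p q r :: int
  assumes det: "a * d - b * c = 1" and inv: "p * p + q * r = 1"
  shows "reversible torus (induced p q r (-p)) (induced a b c d)
           \<longleftrightarrow> p*a + q*c + r*b - p*d = 0"
proof -
  define m11 m12 m21 m22 where "m11 = p*a + q*c" and "m12 = p*b + q*d"
    and "m21 = r*a - p*c" and "m22 = r*b - p*d"
  have comp: "induced p q r (-p) (induced a b c d x) = induced m11 m12 m21 m22 x" for x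
    unfolding induced_comp m11_def m12_def m21_def m22_def by simp
  have "m11 * m22 - m12 * m21 = - (p*p + q*r) * (a*d - b*c)"
    unfolding m11_def m12_def m21_def m22_def by (simp add: algebra_simps)
  then have det_m: "m11 * m22 - m12 * m21 = -1" using det inv by simp
  have "reversible torus (induced p q r (-p)) (induced a b c d)
          \<longleftrightarrow> (\<forall>x\<in>torus. induced p q r (-p) (induced a b c d
                                (induced p q r (-p) (induced a b c d x))) = x)"
    by (rule reversible_iff_involutive_comp[OF involution_on_induced[OF inv] bij_betw_induced])
      (simp add: det)
  also have "\<dots> \<longleftrightarrow> (\<forall>x\<in>torus. induced m11 m12 m21 m22 (induced m11 m12 m21 m22 x) = x)"
    by (simp only: comp)
  also have "\<dots> \<longleftrightarrow> m11 + m22 = 0"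
    unfolding induced_comp induced_eq_id_iff by (rule involutory_iff_trace_zero[OF det_m])
  finally show ?thesis unfolding m11_def m22_def by (simp add: algebra_simps)
qed

lemma anosov_matrix_upper_right_nonzero:
  assumes "anosov_matrix a b c d"
  shows "b \<noteq> 0"
proof
  assume b: "b = 0"
  with assms have "a * d = 1 \<or> a * d = -1" unfolding anosov_matrix_def by simp
  then have "\<bar>a\<bar> = 1" by (metis abs_minus_cancel abs_one abs_zmult_eq_1)
  then have "cmod (of_int a) = 1" by (metis norm_of_int of_int_1 of_int_abs)
  moreover have "(of_int a - of_int a) * (of_int a - of_int d) - of_int b * of_int c = (0::complex)"
    using b by simp
  ultimately show False using assms unfolding anosov_matrix_def by blast
qed

lemma pell_identity:
  fixes a b c d \<alpha> \<beta> :: int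
  assumes "a * d - b * c = 1"
  shows "-4*b * (\<alpha>*\<beta>*(a - d) + \<beta>^2*c + (1 - \<alpha>^2)*b)
           = (2*b*\<alpha> + (d - a)*\<beta>)^2 - ((a + d)^2 - 4) * \<beta>^2 - 4*b^2"
  using assms by algebra

lemma reversible_iff_pell_solution:
  fixes a b c d \<alpha> \<beta> r :: int
  assumes det: "a * d - b * c = 1" and "b \<noteq> 0" and "\<beta> \<noteq> 0" and r: "\<beta> * r = 1 - \<alpha>^2"
  shows "reversible torus (induced \<alpha> \<beta> r (-\<alpha>)) (induced a b c d)
           \<longleftrightarrow> pell_solution ((a + d)^2 - 4) (4 * b^2) (2*b*\<alpha> + (d - a)*\<beta>) \<beta>"
proof -
  have "\<alpha> * \<alpha> + \<beta> * r = 1" using r by (simp add: power2_eq_square)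
  then have "reversible torus (induced \<alpha> \<beta> r (-\<alpha>)) (induced a b c d)
               \<longleftrightarrow> \<alpha>*a + \<beta>*c + r*b - \<alpha>*d = 0"
    by (rule reversible_induced_iff_trace[OF det])
  also have "\<dots> \<longleftrightarrow> -4*b*\<beta> * (\<alpha>*a + \<beta>*c + r*b - \<alpha>*d) = 0"
    using assms by simp
  also have "-4*b*\<beta> * (\<alpha>*a + \<beta>*c + r*b - \<alpha>*d)
               = -4*b * (\<alpha>*\<beta>*(a - d) + \<beta>^2*c + (\<beta>*r)*b)"
    by (simp add: algebra_simps power2_eq_square)
  finally show ?thesis unfolding r pell_identity[OF det] pell_solution_def by simp
qed

theorem theoremA:
  fixes a b c d :: int
  defines "f \<equiv> induced a b c d"
  assumes det: "a * d - b * c = 1"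
    and anosov: "anosov_matrix a b c d"
  shows
   "((b dvd (a - d) \<longleftrightarrow> (\<exists>\<gamma>. reversible torus (induced 1 0 \<gamma> (-1)) f)) \<and>
     (\<forall>\<gamma>. reversible torus (induced 1 0 \<gamma> (-1)) f \<longrightarrow> \<gamma> * b = d - a) \<and>
     (b dvd (a - d) \<longleftrightarrow> (\<exists>\<gamma>. reversible torus (induced (-1) 0 \<gamma> 1) f)) \<and>
     (\<forall>\<gamma>. reversible torus (induced (-1) 0 \<gamma> 1) f \<longrightarrow> \<gamma> * b = a - d))
    \<and>
    ((c dvd (a - d) \<longleftrightarrow> (\<exists>\<gamma>. reversible torus (induced 1 \<gamma> 0 (-1)) f)) \<and>
     (\<forall>\<gamma>. reversible torus (induced 1 \<gamma> 0 (-1)) f \<longrightarrow> \<gamma> * c = d - a) \<and>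
     (c dvd (a - d) \<longleftrightarrow> (\<exists>\<gamma>. reversible torus (induced (-1) \<gamma> 0 1) f)) \<and>
     (\<forall>\<gamma>. reversible torus (induced (-1) \<gamma> 0 1) f \<longrightarrow> \<gamma> * c = a - d))
    \<and>
    (\<forall>\<alpha> \<beta> :: int. \<alpha> \<noteq> 0 \<longrightarrow> \<beta> \<noteq> 0 \<longrightarrow> 1 - \<alpha>^2 \<noteq> 0 \<longrightarrow> \<beta> dvd (1 - \<alpha>^2) \<longrightarrow>
       (reversible torus (induced \<alpha> \<beta> ((1 - \<alpha>^2) div \<beta>) (-\<alpha>)) f \<longleftrightarrow>
        pell_solution ((a + d)^2 - 4) (4 * b^2) (2 * b * \<alpha> + (d - a) * \<beta>) \<beta>))"
proof -
  have "reversible torus (induced 1 0 g (-1)) f \<longleftrightarrow> g * b = d - a"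
    "reversible torus (induced (-1) 0 g 1) f \<longleftrightarrow> g * b = a - d"
    "reversible torus (induced 1 g 0 (-1)) f \<longleftrightarrow> g * c = d - a"
    "reversible torus (induced (-1) g 0 1) f \<longleftrightarrow> g * c = a - d" for g
    using reversible_induced_iff_trace[OF det, of 1 0 g]
      reversible_induced_iff_trace[OF det, of "-1" 0 g] reversible_induced_iff_trace[OF det, of 1 g 0] reversible_induced_iff_trace[OF det, of "-1" g 0]
    unfolding f_def by (simp_all add: algebra_simps)
  moreover have "m dvd (a - d) \<longleftrightarrow> (\<exists>g. g * m = d - a)"
    "m dvd (a - d) \<longleftrightarrow> (\<exists>g. g * m = a - d)" for m :: int
    by (metis dvd_def dvd_diff_commute mult.commute)+
  moreover have "reversible torus (induced \<alpha> \<beta> ((1 - \<alpha>^2) div \<beta>) (-\<alpha>)) f \<longleftrightarrow>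
        pell_solution ((a + d)^2 - 4) (4 * b^2) (2 * b * \<alpha> + (d - a) * \<beta>) \<beta>"
    if "\<beta> \<noteq> 0" "\<beta> dvd (1 - \<alpha>^2)" for \<alpha> \<beta> :: int
    using reversible_iff_pell_solution[OF det anosov_matrix_upper_right_nonzero[OF anosov]] that
    unfolding f_def by simp
  ultimately show ?thesis by auto
qed

end
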